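(* Let $n\geq 3$ be odd, $m>1$ be odd, and let $G$ be a non-regular bipartite graph of order $m$ with a bipartition $\{A,B\}$ such that all vertices of $A$ have the same degree and all vertices of $B$ have the same degree. Then $\chi_{ld}(G[\overline{K_{n}}])=2$.
   Context: All graphs are finite, simple and undirected, without isolated vertices. For a graph $G=(V,E)$ of order $N$ without isolated vertices, a bijection $f\colon V\to\{1,2,\dots,N\}$ is a local distance antimagic labeling if $w(u)\neq w(v)$ for every edge $uv$, where $w(u)=\sum_{x\in N(u)}f(x)$ and $N(u)$ is the open neighborhood of $u$. $\chi_{ld}(G)$ is the minimum number of distinct weights over all local distance antimagic labelings of $G$. $\overline{K_n}$ is the edgeless graph on $n$ vertices. The lexicographic product $G[H]$ has vertex set $V(G)\times V(H)$, with $(g,h)$ adjacent to $(g',h')$ iff $gg'\in E(G)$, or $g=g'$ and $hh'\in E(H)$. *)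

theory Defs
  imports Main
begin

definition simple_graph :: "'a set \<Rightarrow> ('a \<Rightarrow> 'a \<Rightarrow> bool) \<Rightarrow> bool" where
  "simple_graph V E \<longleftrightarrow> finite V \<and> (\<forall>x y. E x y \<longrightarrow> x \<in> V \<and> y \<in> V)
     \<and> (\<forall>x y. E x y \<longrightarrow> E y x) \<and> (\<forall>x. \<not> E x x)"

definition no_isolated :: "'a set \<Rightarrow> ('a \<Rightarrow> 'a \<Rightarrow> bool) \<Rightarrow> bool" where
  "no_isolated V E \<longleftrightarrow> (\<forall>v\<in>V. \<exists>u\<in>V. E v u)"

definition nbhd :: "'a set \<Rightarrow> ('a \<Rightarrow> 'a \<Rightarrow> bool) \<Rightarrow> 'a \<Rightarrow> 'a set" where
  "nbhd V E v = {u \<in> V. E v u}"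

definition deg :: "'a set \<Rightarrow> ('a \<Rightarrow> 'a \<Rightarrow> bool) \<Rightarrow> 'a \<Rightarrow> nat" where
  "deg V E v = card (nbhd V E v)"

definition regular :: "'a set \<Rightarrow> ('a \<Rightarrow> 'a \<Rightarrow> bool) \<Rightarrow> bool" where
  "regular V E \<longleftrightarrow> (\<forall>u\<in>V. \<forall>v\<in>V. deg V E u = deg V E v)"

definition bipartition :: "'a set \<Rightarrow> ('a \<Rightarrow> 'a \<Rightarrow> bool) \<Rightarrow> 'a set \<Rightarrow> 'a set \<Rightarrow> bool" where
  "bipartition V E A B \<longleftrightarrow> A \<union> B = V \<and> A \<inter> B = {}
     \<and> (\<forall>x y. E x y \<longrightarrow> (x \<in> A \<and> y \<in> B) \<or> (x \<in> B \<and> y \<in> A))"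

definition weight :: "'a set \<Rightarrow> ('a \<Rightarrow> 'a \<Rightarrow> bool) \<Rightarrow> ('a \<Rightarrow> nat) \<Rightarrow> 'a \<Rightarrow> nat" where
  "weight V E f u = (\<Sum>x\<in>nbhd V E u. f x)"

definition ld_antimagic :: "'a set \<Rightarrow> ('a \<Rightarrow> 'a \<Rightarrow> bool) \<Rightarrow> ('a \<Rightarrow> nat) \<Rightarrow> bool" where
  "ld_antimagic V E f \<longleftrightarrow> bij_betw f V {1..card V}
     \<and> (\<forall>u v. E u v \<longrightarrow> weight V E f u \<noteq> weight V E f v)"

definition chi_ld :: "'a set \<Rightarrow> ('a \<Rightarrow> 'a \<Rightarrow> bool) \<Rightarrow> nat" where
  "chi_ld V E = Min {card (weight V E f ` V) | f. ld_antimagic V E f}"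

definition lex_verts :: "'a set \<Rightarrow> 'b set \<Rightarrow> ('a \<times> 'b) set" where
  "lex_verts V W = V \<times> W"

definition lex_adj :: "('a \<Rightarrow> 'a \<Rightarrow> bool) \<Rightarrow> ('b \<Rightarrow> 'b \<Rightarrow> bool) \<Rightarrow> 'a \<times> 'b \<Rightarrow> 'a \<times> 'b \<Rightarrow> bool" where
  "lex_adj E F p q \<longleftrightarrow> E (fst p) (fst q) \<or> (fst p = fst q \<and> F (snd p) (snd q))"

definition empty_verts :: "nat \<Rightarrow> nat set" where "empty_verts n = {0..<n}"
definition empty_adj :: "nat \<Rightarrow> nat \<Rightarrow> bool" where "empty_adj x y = False"

end

theory Submission
  imports Defs
begin

text \<open>
  Write the labels 1, ..., m n into an m x n array whose rows are indexed by the vertices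
  of G and whose columns by the n copies of a vertex in G[K_n-bar], such that all rows have
  the same sum C; for m and n odd this is possible (a Kotzig array).  The neighbourhood of
  (v, i) in G[K_n-bar] is N(v) x {0..<n}, so its weight is deg(v) C.  As G is bipartite with
  constant degree on each side but not regular, adjacent vertices have different degrees
  and only two degrees occur: the labeling is local distance antimagic with two weights,
  and no labeling of a graph with an edge gets by with fewer.
\<close>

text \<open>Column i of a (2k+1) x n array whose columns are permutations of {0..2k} and whose
  rows all sum to k n: the first three columns have row sums 3k, the remaining ones come in
  pairs with entries j and 2k - j.\<close>
definition kotzig_entry :: "nat \<Rightarrow> nat \<Rightarrow> nat \<Rightarrow> nat" where
  "kotzig_entry k i j =
     (if i = 0 then j
      else if i = 1 then (if j \<le> k then j + k else j - k - 1)
      else if i = 2 then (if j \<le> k then 2*k - 2*j else 4*k + 1 - 2*j)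
      else if even i then 2*k - j else j)"

lemma kotzig_entry_less: "j < 2*k + 1 \<Longrightarrow> kotzig_entry k i j < 2*k + 1"
  by (auto simp: kotzig_entry_def)

lemma inj_on_kotzig_entry: "inj_on (kotzig_entry k i) {..<2*k + 1}"
  unfolding inj_on_def kotzig_entry_def by (auto split: if_splits; presburger)

lemma kotzig_row_sum:
  assumes "odd n" "3 \<le> n" "j < 2*k + 1"
  shows "(\<Sum>i<n. kotzig_entry k i j) = k * n"
proof -
  have "\<exists>p. n = 3 + 2*p"
    using assms(1,2) by presburger
  then obtain p where n: "n = 3 + 2*p" ..
  have "(\<Sum>i<3 + 2*p. kotzig_entry k i j) = k * (3 + 2*p)"
  proof (induction p)
    case 0
    show ?case using assms(3) by (simp add: numeral_3_eq_3 lessThan_Suc kotzig_entry_def)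
  next
    case (Suc p)
    have "3 + 2 * Suc p = Suc (Suc (3 + 2*p))" by simp
    moreover have "kotzig_entry k (3 + 2*p) j + kotzig_entry k (Suc (3 + 2*p)) j = 2*k"
      using assms(3) by (simp add: kotzig_entry_def)
    ultimately show ?case
      using Suc.IH by (simp only: sum.lessThan_Suc) (simp add: distrib_left)
  qed
  then show ?thesis unfolding n .
qed

definition row_magic_labeling :: "'a set \<Rightarrow> nat \<Rightarrow> ('a \<times> nat \<Rightarrow> nat) \<Rightarrow> nat \<Rightarrow> bool" where
  "row_magic_labeling V n f C \<longleftrightarrow>
     bij_betw f (V \<times> {0..<n}) {1..card V * n} \<and> (\<forall>v\<in>V. (\<Sum>i<n. f (v, i)) = C)"

lemma row_magic_labeling_exists:
  fixes V :: "'a set"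
  assumes "finite V" "odd (card V)" "odd n" "3 \<le> n"
  shows "\<exists>f C. row_magic_labeling V n f C"
proof -
  define m where "m = card V"
  obtain k where k: "m = 2*k + 1"
    using assms(2) m_def by (blast elim: oddE)
  obtain g where g: "bij_betw g V {..<m}"
    using ex_bij_betw_finite_nat[OF assms(1)] m_def by (auto simp: atLeast0LessThan)
  have m_pos: "0 < m"
    using k by simp
  have g_less: "g v < m" if "v \<in> V" for v
    using g that by (auto dest: bij_betw_apply)
  define f where "f = (\<lambda>(v, i). i*m + kotzig_entry k i (g v) + 1)"
  have entry_less: "kotzig_entry k i (g v) < m" if "v \<in> V" for v i
    using kotzig_entry_less g_less[OF that] k by simp
  have "inj_on f (V \<times> {0..<n})"
  proof (rule inj_onI, clarify)
    fix v i w j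
    assume vw: "v \<in> V" "w \<in> V" and "f (v, i) = f (w, j)"
    then have eq: "i*m + kotzig_entry k i (g v) = j*m + kotzig_entry k j (g w)"
      by (simp add: f_def)
    have "i = (i*m + kotzig_entry k i (g v)) div m"
      using entry_less[OF vw(1)] m_pos by simp
    also have "\<dots> = j"
      unfolding eq using entry_less[OF vw(2)] m_pos by simp
    finally have "i = j" .
    with eq have "kotzig_entry k i (g v) = kotzig_entry k i (g w)" by simp
    then have "g v = g w"
      using inj_onD[OF inj_on_kotzig_entry] g_less vw k by simp
    with vw g have "v = w" by (auto simp: bij_betw_def inj_on_def)
    with \<open>i = j\<close> show "v = w \<and> i = j" by simp
  qed
  moreover have "f ` (V \<times> {0..<n}) \<subseteq> {1..m*n}"
  proof clarify
    fix v i assume "v \<in> V" "i \<in> {0..<n}"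
    then have "i*m + kotzig_entry k i (g v) + 1 \<le> (i + 1) * m"
      using entry_less[OF \<open>v \<in> V\<close>, of i] by simp
    also have "\<dots> \<le> m*n"
      using \<open>i \<in> {0..<n}\<close> mult_le_mono1[of "i + 1" n m] by (simp add: mult.commute)
    finally show "f (v, i) \<in> {1..m*n}" by (simp add: f_def)
  qed
  moreover have "card (V \<times> {0..<n}) = card {1..m*n}"
    by (simp add: card_cartesian_product m_def)
  ultimately have bij: "bij_betw f (V \<times> {0..<n}) {1..m*n}"
    by (simp add: bij_betw_def card_subset_eq card_image)
  have "(\<Sum>i<n. f (v, i)) = (\<Sum>i<n. i*m + 1) + k*n" if "v \<in> V" for v
  proof -
    have "(\<Sum>i<n. f (v, i)) = (\<Sum>i<n. i*m + 1) + (\<Sum>i<n. kotzig_entry k i (g v))"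
      unfolding sum.distrib[symmetric] by (simp add: f_def)
    also have "(\<Sum>i<n. kotzig_entry k i (g v)) = k*n"
      using kotzig_row_sum[OF assms(3,4)] g_less[OF that] k by simp
    finally show ?thesis .
  qed
  with bij show ?thesis
    unfolding row_magic_labeling_def m_def by blast
qed

lemma row_magic_labeling_sum_pos:
  assumes "row_magic_labeling V n f C" "v \<in> V" "0 < n"
  shows "0 < C"
proof -
  have "f (v, 0) \<in> {1..card V * n}"
    using assms bij_betw_apply[of f "V \<times> {0..<n}" "{1..card V * n}" "(v, 0)"]
    by (simp add: row_magic_labeling_def)
  then have "0 < (\<Sum>i<n. f (v, i))"
    using assms(3) by (auto intro: sum_pos2[of _ 0])
  then show ?thesis
    using assms(1,2) by (simp add: row_magic_labeling_def)
qed

lemma lex_verts_empty_verts: "lex_verts V (empty_verts n) = V \<times> {0..<n}"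
  by (simp add: lex_verts_def empty_verts_def)

lemma lex_adj_empty_adj: "lex_adj E empty_adj p q \<longleftrightarrow> E (fst p) (fst q)"
  by (simp add: lex_adj_def empty_adj_def)

lemma nbhd_lex_empty:
  "nbhd (lex_verts V (empty_verts n)) (lex_adj E empty_adj) (v, i) = nbhd V E v \<times> {0..<n}"
  by (auto simp: nbhd_def lex_verts_empty_verts lex_adj_empty_adj)

lemma weight_lex_empty:
  assumes "row_magic_labeling V n f C" "v \<in> V"
  shows "weight (lex_verts V (empty_verts n)) (lex_adj E empty_adj) f (v, i) = deg V E v * C"
proof -
  have "weight (lex_verts V (empty_verts n)) (lex_adj E empty_adj) f (v, i)
      = (\<Sum>w\<in>nbhd V E v. \<Sum>j\<in>{0..<n}. f (w, j))"
    unfolding weight_def nbhd_lex_empty by (rule sum.cartesian_product')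
  also have "\<dots> = (\<Sum>w\<in>nbhd V E v. C)"
    using assms(1) by (intro sum.cong) (auto simp: row_magic_labeling_def nbhd_def atLeast0LessThan)
  finally show ?thesis
    by (simp add: deg_def)
qed

lemma ld_antimagic_lex_empty:
  assumes f: "row_magic_labeling V n f C" and "0 < C"
    and adj_deg: "\<And>u w. E u w \<Longrightarrow> u \<in> V \<and> w \<in> V \<and> deg V E u \<noteq> deg V E w"
  shows "ld_antimagic (lex_verts V (empty_verts n)) (lex_adj E empty_adj) f"
  unfolding ld_antimagic_def
proof (intro conjI allI impI)
  show "bij_betw f (lex_verts V (empty_verts n)) {1..card (lex_verts V (empty_verts n))}"
    using f by (simp add: row_magic_labeling_def lex_verts_empty_verts card_cartesian_product)
next
  fix p q assume "lex_adj E empty_adj p q"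
  then have "E (fst p) (fst q)"
    by (simp add: lex_adj_empty_adj)
  with adj_deg \<open>0 < C\<close> show "weight (lex_verts V (empty_verts n)) (lex_adj E empty_adj) f p
      \<noteq> weight (lex_verts V (empty_verts n)) (lex_adj E empty_adj) f q"
    using weight_lex_empty[OF f] by (metis mult_right_cancel not_gr0 prod.collapse)
qed

lemma card_weights_lex_empty_le:
  assumes "finite V" "row_magic_labeling V n f C"
  shows "card (weight (lex_verts V (empty_verts n)) (lex_adj E empty_adj) f
      ` lex_verts V (empty_verts n)) \<le> card (deg V E ` V)"
proof -
  have "weight (lex_verts V (empty_verts n)) (lex_adj E empty_adj) f ` lex_verts V (empty_verts n)
      \<subseteq> (\<lambda>d. d * C) ` deg V E ` V"
    using weight_lex_empty[OF assms(2)] by (auto simp: lex_verts_empty_verts)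
  then show ?thesis
    using assms(1) by (meson card_image_le card_mono finite_imageI le_trans)
qed

definition biregular :: "'a set \<Rightarrow> ('a \<Rightarrow> 'a \<Rightarrow> bool) \<Rightarrow> 'a set \<Rightarrow> 'a set \<Rightarrow> bool" where
  "biregular V E A B \<longleftrightarrow> bipartition V E A B
     \<and> (\<forall>u\<in>A. \<forall>v\<in>A. deg V E u = deg V E v) \<and> (\<forall>u\<in>B. \<forall>v\<in>B. deg V E u = deg V E v)"

lemma biregularE:
  assumes "biregular V E A B"
  obtains dA dB where "\<forall>a\<in>A. deg V E a = dA" "\<forall>b\<in>B. deg V E b = dB"
proof
  show "\<forall>a\<in>A. deg V E a = deg V E (SOME a. a \<in> A)"
  proof
    fix a assume "a \<in> A"
    then have "(SOME a. a \<in> A) \<in> A" by (rule someI)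
    with \<open>a \<in> A\<close> assms show "deg V E a = deg V E (SOME a. a \<in> A)"
      unfolding biregular_def by blast
  qed
  show "\<forall>b\<in>B. deg V E b = deg V E (SOME b. b \<in> B)"
  proof
    fix b assume "b \<in> B"
    then have "(SOME b. b \<in> B) \<in> B" by (rule someI)
    with \<open>b \<in> B\<close> assms show "deg V E b = deg V E (SOME b. b \<in> B)"
      unfolding biregular_def by blast
  qed
qed

lemma biregular_adj_deg_neq:
  assumes "biregular V E A B" "\<not> regular V E" "E u w"
  shows "deg V E u \<noteq> deg V E w"
proof
  assume uw: "deg V E u = deg V E w"
  obtain dA dB where dA: "\<forall>a\<in>A. deg V E a = dA" and dB: "\<forall>b\<in>B. deg V E b = dB"
    using biregularE[OF assms(1)] .
  have "(u \<in> A \<and> w \<in> B) \<or> (u \<in> B \<and> w \<in> A)" "V = A \<union> B"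
    using assms(1,3) unfolding biregular_def bipartition_def by blast+
  with uw dA dB have "\<forall>z\<in>V. deg V E z = dA"
    by auto
  with assms(2) show False
    unfolding regular_def by simp
qed

lemma biregular_card_deg_image:
  assumes "biregular V E A B"
  shows "card (deg V E ` V) \<le> 2"
proof -
  obtain dA dB where "\<forall>a\<in>A. deg V E a = dA" "\<forall>b\<in>B. deg V E b = dB"
    using biregularE[OF assms] .
  moreover have "V = A \<union> B"
    using assms unfolding biregular_def bipartition_def by blast
  ultimately have "deg V E ` V \<subseteq> {dA, dB}"
    by auto
  then have "card (deg V E ` V) \<le> card {dA, dB}"
    by (rule card_mono[rotated]) simp
  also have "\<dots> \<le> 2"
    by (simp add: card_insert_if)
  finally show ?thesis .
qed

lemma ld_antimagic_two_le_card_weights: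
  assumes "finite V" "ld_antimagic V E f" "E x y" "x \<in> V" "y \<in> V"
  shows "2 \<le> card (weight V E f ` V)"
proof -
  have "weight V E f x \<noteq> weight V E f y"
    using assms(2,3) by (simp add: ld_antimagic_def)
  then have "card {weight V E f x, weight V E f y} = 2"
    by simp
  moreover have "{weight V E f x, weight V E f y} \<subseteq> weight V E f ` V"
    using assms(4,5) by simp
  ultimately show ?thesis
    using card_mono[OF finite_imageI[OF assms(1)]] by metis
qed

lemma chi_ld_eq_2I:
  assumes "finite V" "E x y" "x \<in> V" "y \<in> V"
    and "ld_antimagic V E f" "card (weight V E f ` V) \<le> 2"
  shows "chi_ld V E = 2"
proof -
  define S where "S = {card (weight V E g ` V) | g. ld_antimagic V E g}"
  have "S \<subseteq> {..card V}"
    using card_image_le[OF assms(1)] by (auto simp: S_def)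
  then have "finite S"
    by (rule finite_subset) simp
  moreover have "card (weight V E f ` V) = 2"
    using assms(6) ld_antimagic_two_le_card_weights[OF assms(1,5,2-4)] by simp
  then have "2 \<in> S"
    using assms(5) unfolding S_def by (metis (mono_tags, lifting) mem_Collect_eq)
  moreover have "\<forall>s\<in>S. 2 \<le> s"
    using ld_antimagic_two_le_card_weights assms(1-4) by (auto simp: S_def)
  ultimately have "Min S = 2"
    by (intro Min_eqI) auto
  then show ?thesis
    by (simp add: chi_ld_def S_def)
qed

theorem mainTheorem18:
  fixes V :: "'a set" and E :: "'a \<Rightarrow> 'a \<Rightarrow> bool" and A B :: "'a set" and n m :: nat
  assumes "simple_graph V E" and "no_isolated V E"
    and "odd n" and "n \<ge> 3"
    and "card V = m" and "odd m" and "m > 1"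
    and "\<not> regular V E"
    and "bipartition V E A B"
    and "\<forall>u\<in>A. \<forall>v\<in>A. deg V E u = deg V E v"
    and "\<forall>u\<in>B. \<forall>v\<in>B. deg V E u = deg V E v"
  shows "chi_ld (lex_verts V (empty_verts n)) (lex_adj E empty_adj) = 2"
proof -
  have V: "finite V" and E_V: "\<And>u w. E u w \<Longrightarrow> u \<in> V \<and> w \<in> V"
    using assms(1) unfolding simple_graph_def by blast+
  have G: "biregular V E A B"
    unfolding biregular_def using assms(9-11) by blast
  have "V \<noteq> {}"
    using assms(5,7) by auto
  then obtain x y where xy: "E x y"
    using assms(2) unfolding no_isolated_def by blast
  obtain f C where f: "row_magic_labeling V n f C"
    using row_magic_labeling_exists[OF V] assms(3-6) by blast
  have "0 < C"
    using row_magic_labeling_sum_pos[OF f] E_V[OF xy] assms(4) by auto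
  have "finite (lex_verts V (empty_verts n))"
    using V by (simp add: lex_verts_empty_verts)
  moreover have "lex_adj E empty_adj (x, 0) (y, 0)"
    using xy by (simp add: lex_adj_empty_adj)
  moreover have "(x, 0) \<in> lex_verts V (empty_verts n)" "(y, 0) \<in> lex_verts V (empty_verts n)"
    using E_V[OF xy] assms(4) by (simp_all add: lex_verts_empty_verts)
  moreover have "ld_antimagic (lex_verts V (empty_verts n)) (lex_adj E empty_adj) f"
    using ld_antimagic_lex_empty[OF f \<open>0 < C\<close>] E_V biregular_adj_deg_neq[OF G assms(8)]
    by blast
  moreover have "card (weight (lex_verts V (empty_verts n)) (lex_adj E empty_adj) f
      ` lex_verts V (empty_verts n)) \<le> 2"
    using card_weights_lex_empty_le[OF V f, where E = E] biregular_card_deg_image[OF G]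
    by (rule le_trans)
  ultimately show ?thesis
    by (rule chi_ld_eq_2I)
qed

end
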